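(* Let $\mathcal{G}_1,\mathcal{G}_2$ be two games with posetal preferences with the same finite set of players $\mathcal{A}$, the same decision sets $\Gamma_i$, and the same metric functions, differing only in the players' preferences; denote by $\mathsf{P}_i^j$ the preference of player $i$ in $\mathcal{G}_j$. If $\mathsf{P}_i^1\precsim_{\mathrm{pre}(\mathbf{M})}\mathsf{P}_i^2$ for all $i\in\mathcal{A}$, then $\mathsf{NE}^{\precsim}(\mathcal{G}_1)\supseteq\mathsf{NE}^{\precsim}(\mathcal{G}_2)$.
   Context: $\mathbf{M}$ is the set of all metric indices. A game with posetal preferences consists of a finite set of players $\mathcal{A}$; compact decision sets $\Gamma_i$, joint space $\Gamma=\prod_i\Gamma_i$, joint actions $\gamma=\langle\gamma_i,\gamma_{-i}\rangle$; for each player $i$ metric functions $m_i^k\colon\Gamma\to\mathbb{R}_{\ge0}$, $k\in\mathbf{M}$ (lower is better), giving an outcome map $m_i\colon\Gamma\to O_i=\prod_{k}\mathbb{R}_{\ge0}$; and a preference $\mathsf{P}_i=\langle\mathcal{M}_i,\preceq\rangle$, a partial order on a subset $\mathcal{M}_i\subseteq\mathbf{M}$ ($k\preceq l$ means $l$ has priority at least that of $k$). A preference $\mathsf{P}=\langle\mathcal{M},\preceq\rangle$ induces a preorder on outcomes: $o\precsim o'$ iff for every $k\in\mathcal{M}$ with $o^k>o'^k$ there is $l\in\mathcal{M}$ with $k\prec l$ and $o^l<o'^l$ (metrics outside $\mathcal{M}$ are ignored); strict part $o\prec o'$ iff $o\precsim o'$ and not $o'\precsim o$. For preferences $\mathsf{P},\mathsf{P}'$,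 $\mathsf{P}\precsim_{\mathrm{pre}(\mathbf{M})}\mathsf{P}'$ iff the strict relation induced by $\mathsf{P}$ on outcomes is contained in the strict relation induced by $\mathsf{P}'$. The weak best response of player $i$ is $\mathsf{BR}^{\precsim}_i(\gamma_{-i})=\{\gamma_i\in\Gamma_i:\text{ no }\gamma_i'\in\Gamma_i\text{ satisfies } m_i(\langle\gamma_i',\gamma_{-i}\rangle)\prec m_i(\langle\gamma_i,\gamma_{-i}\rangle)\}$, with $\prec$ the strict order induced by player $i$'s preference. The set of weak Nash equilibria is $\mathsf{NE}^{\precsim}(\mathcal{G})=\{\gamma\in\Gamma:\gamma_i\in\mathsf{BR}^{\precsim}_i(\gamma_{-i})\ \forall i\in\mathcal{A}\}$. *)

theory Defs
  imports "HOL-Analysis.Analysis"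
begin

(* Metric indices: the finite type 'k, so that M = UNIV :: 'k set.
   An outcome is a function 'k => real (lower is better), with nonnegative entries.
   A preference is a pair (Mi, R): a subset Mi of M and a relation R that is a
   partial order on Mi; "R k l" means k \<preceq> l (l has priority at least that of k). *)

type_synonym 'k preference = "'k set \<times> ('k \<Rightarrow> 'k \<Rightarrow> bool)"

definition is_preference :: "'k preference \<Rightarrow> bool" where
  "is_preference P \<longleftrightarrow>
     (let Mi = fst P; R = snd P in
        (\<forall>k\<in>Mi. R k k) \<and>
        (\<forall>k\<in>Mi. \<forall>l\<in>Mi. R k l \<longrightarrow> R l k \<longrightarrow> k = l) \<and>
        (\<forall>k\<in>Mi. \<forall>l\<in>Mi. \<forall>n\<in>Mi. R k l \<longrightarrow> R l n \<longrightarrow> R k n))"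

definition is_outcome :: "('k \<Rightarrow> real) \<Rightarrow> bool" where
  "is_outcome x \<longleftrightarrow> (\<forall>k. x k \<ge> 0)"

definition prio_less :: "'k preference \<Rightarrow> 'k \<Rightarrow> 'k \<Rightarrow> bool" where
  "prio_less P k l \<longleftrightarrow> snd P k l \<and> \<not> snd P l k"

definition out_le :: "'k preference \<Rightarrow> ('k \<Rightarrow> real) \<Rightarrow> ('k \<Rightarrow> real) \<Rightarrow> bool" where
  "out_le P x y \<longleftrightarrow>
     (\<forall>k\<in>fst P. x k > y k \<longrightarrow> (\<exists>l\<in>fst P. prio_less P k l \<and> x l < y l))"

definition out_less :: "'k preference \<Rightarrow> ('k \<Rightarrow> real) \<Rightarrow> ('k \<Rightarrow> real) \<Rightarrow> bool" where
  "out_less P x y \<longleftrightarrow> out_le P x y \<and> \<not> out_le P y x"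

definition pref_pre_le :: "'k preference \<Rightarrow> 'k preference \<Rightarrow> bool" where
  "pref_pre_le P P' \<longleftrightarrow>
     (\<forall>x y. is_outcome x \<longrightarrow> is_outcome y \<longrightarrow> out_less P x y \<longrightarrow> out_less P' x y)"

definition is_game ::
  "'p set \<Rightarrow> ('p \<Rightarrow> 'a::topological_space set) \<Rightarrow> ('p \<Rightarrow> 'k \<Rightarrow> ('p \<Rightarrow> 'a) \<Rightarrow> real)
    \<Rightarrow> ('p \<Rightarrow> 'k preference) \<Rightarrow> bool" where
  "is_game A \<Gamma> m P \<longleftrightarrow>
     finite A \<and> (\<forall>i\<in>A. compact (\<Gamma> i)) \<and>
     (\<forall>i\<in>A. \<forall>k. \<forall>\<gamma>\<in>PiE A \<Gamma>. m i k \<gamma> \<ge> 0) \<and>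
     (\<forall>i\<in>A. is_preference (P i))"

(* weak best response of player i to \<gamma>_{-i} (given through the joint action \<gamma>) *)
definition weak_BR ::
  "('p \<Rightarrow> 'a set) \<Rightarrow> ('p \<Rightarrow> 'k \<Rightarrow> ('p \<Rightarrow> 'a) \<Rightarrow> real) \<Rightarrow> ('p \<Rightarrow> 'k preference)
    \<Rightarrow> 'p \<Rightarrow> ('p \<Rightarrow> 'a) \<Rightarrow> 'a set" where
  "weak_BR \<Gamma> m P i \<gamma> =
     {g \<in> \<Gamma> i. \<not> (\<exists>g'\<in>\<Gamma> i.
         out_less (P i) (\<lambda>k. m i k (\<gamma>(i := g'))) (\<lambda>k. m i k (\<gamma>(i := g))))}"

definition weak_NE ::
  "'p set \<Rightarrow> ('p \<Rightarrow> 'a set) \<Rightarrow> ('p \<Rightarrow> 'k \<Rightarrow> ('p \<Rightarrow> 'a) \<Rightarrow> real) \<Rightarrow> ('p \<Rightarrow> 'k preference)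
    \<Rightarrow> ('p \<Rightarrow> 'a) set" where
  "weak_NE A \<Gamma> m P = {\<gamma> \<in> PiE A \<Gamma>. \<forall>i\<in>A. \<gamma> i \<in> weak_BR \<Gamma> m P i \<gamma>}"

end

theory Submission
  imports Defs
begin

text \<open>A weaker preference (fewer strictly preferred outcomes) can only enlarge the set of
  weak best responses, since every profitable deviation under it is also profitable under the
  stronger one; hence it can only enlarge the set of weak Nash equilibria.
  Since the comparison of preferences only concerns nonnegative outcomes, the deviations have to
  be shown to yield such outcomes.\<close>

lemma metrics_is_outcome:
  assumes "is_game A \<Gamma> m P" and "i \<in> A" and "\<gamma> \<in> PiE A \<Gamma>"
  shows "is_outcome (\<lambda>k. m i k \<gamma>)"
  using assms unfolding is_game_def is_outcome_def by blast

lemma deviation_in_PiE: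
  assumes "\<gamma> \<in> PiE A \<Gamma>" and "i \<in> A" and "g \<in> \<Gamma> i"
  shows "\<gamma>(i := g) \<in> PiE A \<Gamma>"
  using PiE_fun_upd[OF assms(3,1)] assms(2) by (simp add: insert_absorb)

lemma weak_BR_antimono:
  assumes outcomes: "\<And>g. g \<in> \<Gamma> i \<Longrightarrow> is_outcome (\<lambda>k. m i k (\<gamma>(i := g)))"
    and pre: "pref_pre_le (P i) (P' i)"
  shows "weak_BR \<Gamma> m P' i \<gamma> \<subseteq> weak_BR \<Gamma> m P i \<gamma>"
proof
  fix g assume g: "g \<in> weak_BR \<Gamma> m P' i \<gamma>"
  then have g_in: "g \<in> \<Gamma> i" by (simp add: weak_BR_def)
  have "\<not> out_less (P i) (\<lambda>k. m i k (\<gamma>(i := g'))) (\<lambda>k. m i k (\<gamma>(i := g)))"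
    if g': "g' \<in> \<Gamma> i" for g'
  proof
    assume "out_less (P i) (\<lambda>k. m i k (\<gamma>(i := g'))) (\<lambda>k. m i k (\<gamma>(i := g)))"
    with pre outcomes[OF g'] outcomes[OF g_in]
    have "out_less (P' i) (\<lambda>k. m i k (\<gamma>(i := g'))) (\<lambda>k. m i k (\<gamma>(i := g)))"
      unfolding pref_pre_le_def by blast
    with g g' show False by (auto simp: weak_BR_def)
  qed
  with g_in show "g \<in> weak_BR \<Gamma> m P i \<gamma>" by (simp add: weak_BR_def)
qed

lemma weak_NE_antimono:
  assumes "\<And>i \<gamma>. i \<in> A \<Longrightarrow> \<gamma> \<in> PiE A \<Gamma> \<Longrightarrow> weak_BR \<Gamma> m P' i \<gamma> \<subseteq> weak_BR \<Gamma> m P i \<gamma>"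
  shows "weak_NE A \<Gamma> m P' \<subseteq> weak_NE A \<Gamma> m P"
  using assms unfolding weak_NE_def by blast

theorem theorem2:
  fixes A :: "'p set"
    and \<Gamma> :: "'p \<Rightarrow> 'a::topological_space set"
    and m :: "'p \<Rightarrow> 'k::finite \<Rightarrow> ('p \<Rightarrow> 'a) \<Rightarrow> real"
    and P1 P2 :: "'p \<Rightarrow> 'k preference"
  assumes "is_game A \<Gamma> m P1"
    and "is_game A \<Gamma> m P2"
    and "\<forall>i\<in>A. pref_pre_le (P1 i) (P2 i)"
  shows "weak_NE A \<Gamma> m P1 \<supseteq> weak_NE A \<Gamma> m P2"
proof (rule weak_NE_antimono)
  fix i \<gamma> assume i: "i \<in> A" and \<gamma>: "\<gamma> \<in> PiE A \<Gamma>"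
  show "weak_BR \<Gamma> m P2 i \<gamma> \<subseteq> weak_BR \<Gamma> m P1 i \<gamma>"
  proof (rule weak_BR_antimono)
    fix g assume "g \<in> \<Gamma> i"
    \<comment> \<open>nonnegativity of the metrics from either game would do\<close>
    then show "is_outcome (\<lambda>k. m i k (\<gamma>(i := g)))"
      using metrics_is_outcome[OF assms(1) i] deviation_in_PiE[OF \<gamma> i] by blast
  next
    show "pref_pre_le (P1 i) (P2 i)" using assms(3) i by blast
  qed
qed

end
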